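(* Let $q$ be a prime power and let $M=(m_{ij})$ be a $2\times 2$ matrix over $\mathbb{F}_{q^2}$ with $m_{21}\neq 0$ and $m_{12}\neq 0$. Then: (i) $\sharp(\mathrm{Num}'_0(M))\ge\lceil (q+1)/2\rceil$; (ii) if $(-m_{12}/m_{21})^{q+1}\neq 1$, then $\sharp(\mathrm{Num}'_0(M))\ge q+1$.
   Context: The Hermitian form on $\mathbb{F}_{q^2}^n$ is $\langle u,v\rangle=\sum_i u_i^q v_i$. For an $n\times n$ matrix $M$ over $\mathbb{F}_{q^2}$ with $n\ge 2$, $\mathrm{Num}'_0(M)=\{\langle u,Mu\rangle: u\in\mathbb{F}_{q^2}^n\setminus\{0\},\ \langle u,u\rangle=0\}$. *)

theory Defs
  imports "HOL-Analysis.Analysis"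
begin

definition herm :: "nat \<Rightarrow> ('a::field)^'n \<Rightarrow> 'a^'n \<Rightarrow> 'a" where
  "herm q u v = (\<Sum>i\<in>UNIV. (u $ i) ^ q * v $ i)"

definition Num0' :: "nat \<Rightarrow> ('a::field)^'n^'n \<Rightarrow> 'a set" where
  "Num0' q M = {herm q u (M *v u) | u. u \<noteq> 0 \<and> herm q u u = 0}"

end

theory Submission
  imports Defs "HOL-Computational_Algebra.Polynomial"
begin

text \<open>The isotropic vectors with first coordinate 1 are the \<open>(1, t)\<close> with \<open>t^(q+1) = -1\<close>,
  and there are \<open>q + 1\<close> such \<open>t\<close>: the norm \<open>x \<mapsto> x^(q+1)\<close> maps the \<open>q^2 - 1\<close> units into
  the \<open>q - 1\<close> roots of \<open>y^(q-1) = 1\<close> with fibres of size at most \<open>q + 1\<close>, so every fibre is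
  full. For these vectors \<open>\<langle>u, Mu\<rangle> = m11 + m12 t + t^q (m21 + m22 t)\<close>, and as \<open>t^q = -1/t\<close>,
  two parameters \<open>t \<noteq> s\<close> give the same value only if \<open>t s = -m21/m12\<close>. So every value is
  taken at most twice, and only once if \<open>-m21/m12\<close> does not have norm 1, since \<open>t s\<close> has.\<close>

lemma card_le_mult_card_image:
  assumes "finite S" and "\<And>y. card {x \<in> S. g x = y} \<le> k"
  shows "card S \<le> k * card (g ` S)"
proof -
  have "card S = (\<Sum>y\<in>g ` S. card {x \<in> S. g x = y})"
    using sum.image_gen[OF assms(1), of "\<lambda>_. 1::nat" g] by simp
  also have "\<dots> \<le> (\<Sum>y\<in>g ` S. k)"
    by (rule sum_mono) (rule assms(2))
  finally show ?thesis
    by (simp add: mult.commute)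
qed

lemma card_fibre_ge_of_card_eq_mult:
  assumes "finite S" "finite B" "g ` S \<subseteq> B" "card B \<le> n" "card S = n * k"
    and fibre_le: "\<And>z. card {x \<in> S. g x = z} \<le> k" and "y \<in> B"
  shows "k \<le> card {x \<in> S. g x = y}"
proof -
  let ?F = "\<lambda>z. card {x \<in> S. g x = z}"
  have "n * k = (\<Sum>z\<in>B. ?F z)"
    using sum.group[OF assms(1-3), of "\<lambda>_. 1::nat"] assms(5) by simp
  also have "\<dots> = ?F y + (\<Sum>z\<in>B - {y}. ?F z)"
    using assms(2,7) by (simp add: sum.remove)
  also have "(\<Sum>z\<in>B - {y}. ?F z) \<le> (n - 1) * k"
  proof -
    have "(\<Sum>z\<in>B - {y}. ?F z) \<le> card (B - {y}) * k"
      using sum_mono[of "B - {y}" ?F "\<lambda>_. k", OF fibre_le] by simp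
    also have "\<dots> \<le> (n - 1) * k"
      using assms(2,4,7) by (simp add: card_Diff_singleton diff_le_mono)
    finally show ?thesis .
  qed
  finally have "n * k \<le> ?F y + (n - 1) * k"
    by simp
  moreover have "n * k = (n - 1) * k + k"
    using assms(2,4,7) card_gt_0_iff[of B] by (cases n) auto
  ultimately show ?thesis
    by linarith
qed

lemma card_le_two_mult_card_image:
  fixes g :: "'a::field \<Rightarrow> 'b"
  assumes "finite S" "0 \<notin> S" and collision: "\<And>t s. t \<in> S \<Longrightarrow> s \<in> S \<Longrightarrow> g t = g s \<Longrightarrow> t = s \<or> t * s = c"
  shows "card S \<le> 2 * card (g ` S)"
proof (rule card_le_mult_card_image[OF assms(1)])
  fix y
  show "card {x \<in> S. g x = y} \<le> 2"
  proof (cases "y \<in> g ` S")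
    case True
    then obtain t where t: "t \<in> S" "g t = y"
      by blast
    have "{x \<in> S. g x = y} \<subseteq> {t, c / t}"
    proof
      fix x
      assume "x \<in> {x \<in> S. g x = y}"
      then have "x = t \<or> x * t = c"
        using t collision[of x t] by simp
      then show "x \<in> {t, c / t}"
        using t assms(2) by (auto simp: eq_divide_eq)
    qed
    then have "card {x \<in> S. g x = y} \<le> card {t, c / t}"
      by (rule card_mono[rotated]) simp
    also have "\<dots> \<le> 2"
      by (simp add: card_insert_if)
    finally show ?thesis .
  next
    case False
    then have "{x \<in> S. g x = y} = {}"
      by auto
    then show ?thesis
      by (metis card.empty le0)
  qed
qed

lemma card_image_eq_of_collision:
  assumes collision: "\<And>t s. t \<in> S \<Longrightarrow> s \<in> S \<Longrightarrow> g t = g s \<Longrightarrow> t = s \<or> t * s = c"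
    and "\<And>t s. t \<in> S \<Longrightarrow> s \<in> S \<Longrightarrow> t * s \<noteq> c"
  shows "card (g ` S) = card S"
proof (rule card_image)
  show "inj_on g S"
    using assms by (intro inj_onI) blast
qed

lemma power_card_minus_one_eq_one:
  fixes x :: "'a::{field,finite}"
  assumes "x \<noteq> 0"
  shows "x ^ (CARD('a) - 1) = 1"
proof -
  let ?U = "UNIV - {0::'a}"
  have "bij_betw ((*) x) ?U ?U"
    using assms by (intro bij_betwI[where g = "\<lambda>y. y / x"]) auto
  then have "(\<Prod>y\<in>?U. y) = (\<Prod>y\<in>?U. x * y)"
    by (rule prod.reindex_bij_betw[symmetric])
  also have "\<dots> = x ^ card ?U * (\<Prod>y\<in>?U. y)"
    by (simp add: prod.distrib)
  finally have "x ^ card ?U = 1"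
    by simp
  then show ?thesis
    by (simp add: card_Diff_singleton)
qed

lemma card_roots_of_power_le:
  fixes c :: "'a::idom"
  assumes "n > 0"
  shows "card {x. x ^ n = c} \<le> n"
proof -
  let ?p = "monom 1 n + [:-c:]"
  have deg: "degree ?p = n"
    using assms by (subst degree_add_eq_left) (auto simp: degree_monom_eq)
  then have "?p \<noteq> 0"
    using assms by auto
  then have "card {x. poly ?p x = 0} \<le> n"
    using card_poly_roots_bound deg by metis
  moreover have "{x. poly ?p x = 0} = {x. x ^ n = c}"
    by (simp add: poly_monom)
  ultimately show ?thesis
    by simp
qed

lemma two_le_of_card_eq_square:
  assumes "CARD('a::{field,finite}) = q ^ 2"
  shows "2 \<le> q"
proof (rule ccontr)
  assume "\<not> 2 \<le> q"
  then have "CARD('a) \<le> 1"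
    using assms power_le_one[of q 2] by simp
  moreover have "card {0::'a, 1} \<le> CARD('a)"
    by (rule card_mono) auto
  ultimately show False
    by simp
qed

lemma card_norm_fibre:
  fixes c :: "'a::{field,finite}"
  assumes card: "CARD('a) = q ^ 2" and c: "c ^ (q - 1) = 1"
  shows "card {t::'a. t ^ (q + 1) = c} = q + 1"
proof (rule antisym)
  show "card {t::'a. t ^ (q + 1) = c} \<le> q + 1"
    by (rule card_roots_of_power_le) simp
next
  have q: "2 \<le> q"
    using two_le_of_card_eq_square[OF card] .
  let ?U = "UNIV - {0::'a}"
  let ?R = "{y::'a. y ^ (q - 1) = 1}"
  have split: "q ^ 2 - 1 = (q - 1) * (q + 1)"
    by (cases q) (simp_all add: power2_eq_square)
  have "(x ^ (q + 1)) ^ (q - 1) = 1" if "x \<noteq> 0" for x :: 'a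
  proof -
    have "(x ^ (q + 1)) ^ (q - 1) = x ^ (CARD('a) - 1)"
      unfolding card split by (metis power_mult mult.commute)
    also have "\<dots> = 1"
      by (rule power_card_minus_one_eq_one[OF that])
    finally show ?thesis .
  qed
  then have into: "(\<lambda>x. x ^ (q + 1)) ` ?U \<subseteq> ?R"
    by auto
  have card_R: "card ?R \<le> q - 1"
    using q by (intro card_roots_of_power_le) simp
  have card_U: "card ?U = (q - 1) * (q + 1)"
    unfolding split[symmetric] by (simp add: card_Diff_singleton card)
  have fibre: "card {x \<in> ?U. x ^ (q + 1) = z} \<le> q + 1" for z
  proof -
    have "card {x \<in> ?U. x ^ (q + 1) = z} \<le> card {x::'a. x ^ (q + 1) = z}"
      by (rule card_mono) auto
    also have "\<dots> \<le> q + 1"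
      by (rule card_roots_of_power_le) simp
    finally show ?thesis .
  qed
  have "q + 1 \<le> card {x \<in> ?U. x ^ (q + 1) = c}"
    by (rule card_fibre_ge_of_card_eq_mult[OF _ _ into card_R card_U fibre]) (use c in simp_all)
  also have "\<dots> \<le> card {t::'a. t ^ (q + 1) = c}"
    by (rule card_mono) auto
  finally show "q + 1 \<le> card {t::'a. t ^ (q + 1) = c}" .
qed

text \<open>For even \<open>q\<close> the field has characteristic 2, as \<open>(-1)^(q^2-1) = 1\<close> with an odd exponent.\<close>

lemma minus_one_power_pred_eq_one:
  assumes card: "CARD('a::{field,finite}) = q ^ 2"
  shows "(-1::'a) ^ (q - 1) = 1"
proof (cases "even q")
  case True
  have "odd (q ^ 2 - 1)"
    using True two_le_of_card_eq_square[OF card] by auto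
  then have "(-1::'a) = 1"
    using power_card_minus_one_eq_one[of "-1::'a"] card by simp
  then show ?thesis
    by (metis power_one)
next
  case False
  then have "even (q - 1)"
    using two_le_of_card_eq_square[OF card] by auto
  then show ?thesis
    by simp
qed

lemma herm_vector_one_self:
  fixes t :: "'a::field"
  shows "herm q (vector [1, t] :: 'a^2) (vector [1, t]) = 1 + t ^ (q + 1)"
  by (simp add: herm_def sum_2 mult.commute)

lemma herm_vector_one_matrix:
  fixes M :: "('a::field)^2^2"
  shows "herm q (vector [1, t]) (M *v vector [1, t])
    = M $ 1 $ 1 + M $ 1 $ 2 * t + t ^ q * (M $ 2 $ 1 + M $ 2 $ 2 * t)"
  by (simp add: herm_def sum_2 matrix_vector_mult_def)

lemma herm_vector_one_mem_Num0':
  fixes M :: "('a::field)^2^2"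
  assumes "t ^ (q + 1) = -1"
  shows "herm q (vector [1, t]) (M *v vector [1, t]) \<in> Num0' q M"
proof -
  have "vector [1, t] \<noteq> (0::'a^2)"
    by (metis vector_2(1) zero_index one_neq_zero)
  then show ?thesis
    using assms herm_vector_one_self[of q t] unfolding Num0'_def by auto
qed

lemma norm_minus_one_collision:
  fixes a b c d t s :: "'a::field"
  assumes t: "t ^ (q + 1) = -1" and s: "s ^ (q + 1) = -1" and "a \<noteq> 0"
    and eq: "c + a * t + t ^ q * (b + d * t) = c + a * s + s ^ q * (b + d * s)"
  shows "t = s \<or> t * s = - b / a"
proof -
  have tq: "t ^ q * t = -1" and sq: "s ^ q * s = -1"
    using t s by (simp_all add: mult.commute)
  have "t ^ q * (b + d * t) = b * t ^ q + d * (t ^ q * t)"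
    and "s ^ q * (b + d * s) = b * s ^ q + d * (s ^ q * s)"
    by (simp_all add: algebra_simps)
  then have "a * t + b * t ^ q = a * s + b * s ^ q"
    using eq tq sq by simp
  moreover have "(t - s) * (a * (t * s) + b) = 0"
    if "x * t = -1" "y * s = -1" "a * t + b * x = a * s + b * y" for x y
    using that by algebra
  ultimately have "(t - s) * (a * (t * s) + b) = 0"
    using tq sq by blast
  then show ?thesis
    using \<open>a \<noteq> 0\<close> by (auto simp: eq_divide_eq add_eq_0_iff mult.commute)
qed

lemma herm_vector_one_collision:
  fixes M :: "('a::field)^2^2"
  assumes "t ^ (q + 1) = -1" "s ^ (q + 1) = -1" "M $ 1 $ 2 \<noteq> 0"
    and "herm q (vector [1, t]) (M *v vector [1, t]) = herm q (vector [1, s]) (M *v vector [1, s])"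
  shows "t = s \<or> t * s = - M $ 2 $ 1 / M $ 1 $ 2"
  using assms(4) unfolding herm_vector_one_matrix by (rule norm_minus_one_collision[OF assms(1-3)])

lemma norm_mult_eq_one:
  fixes t s :: "'a::comm_ring_1"
  assumes "t ^ (q + 1) = -1" "s ^ (q + 1) = -1"
  shows "(t * s) ^ (q + 1) = 1"
  using assms by (simp only: power_mult_distrib) simp

lemma power_minus_divide_swap_ne_one:
  fixes a b :: "'a::field"
  assumes "(- a / b) ^ n \<noteq> 1"
  shows "(- b / a) ^ n \<noteq> 1"
proof -
  have "- b / a = inverse (- a / b)"
    by simp
  then have "(- b / a) ^ n = inverse ((- a / b) ^ n)"
    by (simp only: power_inverse)
  then show ?thesis
    using assms by simp
qed

theorem proposition4:
  fixes M :: "('a::{field,finite})^2^2" and q :: nat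
  assumes "\<exists>p k. prime p \<and> k > 0 \<and> q = p ^ k"
    and "CARD('a) = q ^ 2"
    and "M $ 2 $ 1 \<noteq> 0" and "M $ 1 $ 2 \<noteq> 0"
  shows "int (card (Num0' q M)) \<ge> \<lceil>real (q + 1) / 2\<rceil>
    \<and> ((- M $ 1 $ 2 / M $ 2 $ 1) ^ (q + 1) \<noteq> 1 \<longrightarrow> card (Num0' q M) \<ge> q + 1)"
proof -
  define T where "T = {t::'a. t ^ (q + 1) = -1}"
  define f where "f t = herm q (vector [1, t]) (M *v vector [1, t])" for t
  let ?c = "- M $ 2 $ 1 / M $ 1 $ 2"
  have card_T: "card T = q + 1"
    unfolding T_def by (rule card_norm_fibre[OF assms(2) minus_one_power_pred_eq_one[OF assms(2)]])
  have f_T: "card (f ` T) \<le> card (Num0' q M)"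
    by (rule card_mono) (auto simp: f_def T_def herm_vector_one_mem_Num0')
  have collision: "t = s \<or> t * s = ?c" if "t \<in> T" "s \<in> T" "f t = f s" for t s
    using herm_vector_one_collision[OF _ _ assms(4)] that unfolding T_def f_def by blast
  have "card T \<le> 2 * card (f ` T)"
  proof (rule card_le_two_mult_card_image[where c = ?c])
    show "0 \<notin> T"
      by (simp add: T_def)
  qed (simp, rule collision)
  then have "q + 1 \<le> 2 * card (Num0' q M)"
    using f_T card_T by linarith
  then have "real (q + 1) / 2 \<le> real (card (Num0' q M))"
    using of_nat_mono[where 'a = real] by fastforce
  moreover have "q + 1 \<le> card (Num0' q M)"
    if not_norm_one: "(- M $ 1 $ 2 / M $ 2 $ 1) ^ (q + 1) \<noteq> 1"
  proof -
    have "t * s \<noteq> ?c" if "t \<in> T" "s \<in> T" for t s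
      using norm_mult_eq_one[of t q s] that power_minus_divide_swap_ne_one[OF not_norm_one]
      by (auto simp: T_def)
    with collision have "card (f ` T) = card T"
      by (rule card_image_eq_of_collision)
    then show ?thesis
      using f_T card_T by simp
  qed
  ultimately show ?thesis
    by (simp add: ceiling_le_iff)
qed

end
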